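(* Let $N,d\in\mathbb{N}^*$, $\alpha>0$, $A\in\mathbb{R}_+^{N\times N}$, and $\psi:\mathbb{R}_+\to\mathbb{R}_+$ with $(r_1-r_2)(\psi(r_1)-\psi(r_2))\le0$ for all $r_1,r_2\ge0$ and $0<\psi(r)\le\psi(0)\le1$. Let $\pi$ be a probability measure on $\{1,\dots,N\}$ with $\pi_iA_{ij}=\pi_jA_{ji}$ for all $i\ne j$. Let $(x_i,v_i)_i$ be a solution on $\mathbb{R}_+$ of $$\frac{dx_i}{dt}=v_i,\qquad\frac{dv_i}{dt}=\alpha\sum_{j\ne i}A_{ij}\psi(\|x_j-x_i\|_2)(v_j-v_i)$$ which flocks, i.e. $\sup_{t\ge0}\sup_{i,j}\|x_i(t)-x_j(t)\|_2<+\infty$ and $\sup_{i,j}\|v_i(t)-v_j(t)\|_2\to0$ as $t\to+\infty$. Then $\|v_i(t)-v^*\|_2\to0$ as $t\to+\infty$ for all $i$, where $v^*=\sum_{i=1}^N\pi_iv_i(0)$.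
   Context: $\|\cdot\|_2$ is the Euclidean norm on $\mathbb{R}^d$. *)

theory Defs
  imports "HOL-Analysis.Analysis"
begin

end

theory Submission
  imports Defs
begin

text \<open>Detailed balance \<open>\<pi>\<^sub>i A\<^sub>i\<^sub>j = \<pi>\<^sub>j A\<^sub>j\<^sub>i\<close> makes the pairwise interaction terms of
  \<open>\<Sum>\<^sub>i \<pi>\<^sub>i dv\<^sub>i/dt\<close> cancel, so the \<open>\<pi>\<close>-weighted mean velocity is constant and equal to \<open>v\<^sup>*\<close>.
  Being a convex combination of the velocities, it lies within the velocity diameter
  \<open>max\<^sub>i\<^sub>,\<^sub>j \<parallel>v\<^sub>i - v\<^sub>j\<parallel>\<close> of every \<open>v\<^sub>i\<close>, and that diameter tends to \<open>0\<close>.\<close>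

lemma sum_symmetric_weighted_differences:
  fixes w :: "'i \<Rightarrow> 'i \<Rightarrow> real" and u :: "'i \<Rightarrow> 'a::real_vector"
  assumes "finite S"
    and sym: "\<And>k j. k \<in> S \<Longrightarrow> j \<in> S \<Longrightarrow> k \<noteq> j \<Longrightarrow> w k j = w j k"
  shows "(\<Sum>k\<in>S. \<Sum>j\<in>S. w k j *\<^sub>R (u j - u k)) = 0"
proof -
  define T where "T = (\<Sum>k\<in>S. \<Sum>j\<in>S. w k j *\<^sub>R (u j - u k))"
  have "T = (\<Sum>j\<in>S. \<Sum>k\<in>S. w k j *\<^sub>R (u j - u k))"
    unfolding T_def by (rule sum.swap)
  also have "\<dots> = (\<Sum>j\<in>S. \<Sum>k\<in>S. - (w j k *\<^sub>R (u k - u j)))"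
    by (intro sum.cong refl) (metis sym minus_diff_eq scaleR_minus_right diff_self scaleR_zero_right)
  also have "\<dots> = - T"
    unfolding T_def by (simp add: sum_negf)
  finally show ?thesis
    unfolding T_def by (simp add: eq_neg_iff_add_eq_0 flip: scaleR_2)
qed

lemma weighted_mean_velocity_constant:
  fixes v :: "nat \<Rightarrow> real \<Rightarrow> 'a::real_normed_vector"
    and a :: "nat \<Rightarrow> nat \<Rightarrow> real \<Rightarrow> real" and \<pi> :: "nat \<Rightarrow> real"
  assumes balance: "\<And>i j t. i < N \<Longrightarrow> j < N \<Longrightarrow> i \<noteq> j \<Longrightarrow> t \<ge> 0 \<Longrightarrow>
               \<pi> i * a i j t = \<pi> j * a j i t"
    and dv: "\<And>i t. i < N \<Longrightarrow> t \<ge> 0 \<Longrightarrow>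
               (v i has_vector_derivative (\<Sum>j\<in>{..<N} - {i}. a i j t *\<^sub>R (v j t - v i t)))
               (at t within {0..})"
    and "t \<ge> 0"
  shows "(\<Sum>k<N. \<pi> k *\<^sub>R v k t) = (\<Sum>k<N. \<pi> k *\<^sub>R v k 0)"
proof (rule has_derivative_zero_unique[where s = "{0..}"])
  fix s :: real assume "s \<in> {0..}"
  then have s: "s \<ge> 0" by simp
  have cancel: "(\<Sum>k<N. \<pi> k *\<^sub>R (\<Sum>j\<in>{..<N} - {k}. a k j s *\<^sub>R (v j s - v k s))) = 0"
  proof -
    have "(\<Sum>j\<in>{..<N} - {k}. a k j s *\<^sub>R (v j s - v k s)) = (\<Sum>j<N. a k j s *\<^sub>R (v j s - v k s))"
      for k by (rule sum.mono_neutral_left) auto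
    then have "(\<Sum>k<N. \<pi> k *\<^sub>R (\<Sum>j\<in>{..<N} - {k}. a k j s *\<^sub>R (v j s - v k s)))
        = (\<Sum>k<N. \<Sum>j<N. (\<pi> k * a k j s) *\<^sub>R (v j s - v k s))"
      by (simp add: scaleR_sum_right)
    also have "\<dots> = 0"
      by (rule sum_symmetric_weighted_differences) (auto intro: balance s)
    finally show ?thesis .
  qed
  have "((\<lambda>t. \<pi> k *\<^sub>R v k t) has_vector_derivative
          \<pi> k *\<^sub>R (\<Sum>j\<in>{..<N} - {k}. a k j s *\<^sub>R (v j s - v k s))) (at s within {0..})"
    if "k < N" for k
    using has_vector_derivative_scaleR[OF DERIV_const dv[OF that s]] by simp
  then have "((\<lambda>t. \<Sum>k<N. \<pi> k *\<^sub>R v k t) has_vector_derivative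
          (\<Sum>k<N. \<pi> k *\<^sub>R (\<Sum>j\<in>{..<N} - {k}. a k j s *\<^sub>R (v j s - v k s)))) (at s within {0..})"
    by (intro has_vector_derivative_sum) simp
  then show "((\<lambda>t. \<Sum>k<N. \<pi> k *\<^sub>R v k t) has_derivative (\<lambda>h. 0)) (at s within {0..})"
    by (simp add: cancel has_vector_derivative_def)
qed (use \<open>t \<ge> 0\<close> in auto)

lemma norm_diff_convex_combination_le:
  fixes p :: "'i \<Rightarrow> real" and y :: "'i \<Rightarrow> 'a::real_normed_vector"
  assumes "finite S" and p_nonneg: "\<And>k. k \<in> S \<Longrightarrow> p k \<ge> 0" and p_sum: "sum p S = 1"
    and close: "\<And>k. k \<in> S \<Longrightarrow> norm (u - y k) \<le> B"
  shows "norm (u - (\<Sum>k\<in>S. p k *\<^sub>R y k)) \<le> B"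
proof -
  have "u - (\<Sum>k\<in>S. p k *\<^sub>R y k) = (\<Sum>k\<in>S. p k *\<^sub>R (u - y k))"
    by (simp add: p_sum scaleR_diff_right sum_subtractf flip: scaleR_sum_left)
  also have "norm \<dots> \<le> (\<Sum>k\<in>S. p k * norm (u - y k))"
    using norm_sum[of "\<lambda>k. p k *\<^sub>R (u - y k)" S] by (simp add: p_nonneg)
  also have "\<dots> \<le> (\<Sum>k\<in>S. p k * B)"
    by (intro sum_mono mult_left_mono close p_nonneg)
  also have "\<dots> = B"
    by (simp add: p_sum flip: sum_distrib_right)
  finally show ?thesis .
qed

theorem proposition4p5:
  fixes N :: nat and \<alpha> :: real and A :: "nat \<Rightarrow> nat \<Rightarrow> real"
    and \<psi> :: "real \<Rightarrow> real" and \<pi> :: "nat \<Rightarrow> real"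
    and x v :: "nat \<Rightarrow> real \<Rightarrow> 'a::euclidean_space"
  assumes N_pos: "N \<ge> 1"
    and alpha_pos: "\<alpha> > 0"
    and A_nonneg: "\<And>i j. i < N \<Longrightarrow> j < N \<Longrightarrow> A i j \<ge> 0"
    and psi_mono: "\<And>r1 r2. r1 \<ge> 0 \<Longrightarrow> r2 \<ge> 0 \<Longrightarrow> (r1 - r2) * (\<psi> r1 - \<psi> r2) \<le> 0"
    and psi_pos: "\<And>r. r \<ge> 0 \<Longrightarrow> 0 < \<psi> r"
    and psi_le0: "\<And>r. r \<ge> 0 \<Longrightarrow> \<psi> r \<le> \<psi> 0"
    and psi0_le1: "\<psi> 0 \<le> 1"
    and pi_nonneg: "\<And>i. i < N \<Longrightarrow> \<pi> i \<ge> 0"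
    and pi_sum: "(\<Sum>i<N. \<pi> i) = 1"
    and pi_rev: "\<And>i j. i < N \<Longrightarrow> j < N \<Longrightarrow> i \<noteq> j \<Longrightarrow> \<pi> i * A i j = \<pi> j * A j i"
    and dx: "\<And>i t. i < N \<Longrightarrow> t \<ge> 0 \<Longrightarrow>
               (x i has_vector_derivative v i t) (at t within {0..})"
    and dv: "\<And>i t. i < N \<Longrightarrow> t \<ge> 0 \<Longrightarrow>
               (v i has_vector_derivative
                  (\<alpha> *\<^sub>R (\<Sum>j\<in>{..<N} - {i}. (A i j * \<psi> (norm (x j t - x i t))) *\<^sub>R (v j t - v i t))))
               (at t within {0..})"
    and flock_x: "\<exists>B. \<forall>t\<ge>0. \<forall>i<N. \<forall>j<N. norm (x i t - x j t) \<le> B"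
    and flock_v: "((\<lambda>t. Max {norm (v i t - v j t) | i j. i < N \<and> j < N}) \<longlongrightarrow> 0) at_top"
  shows "\<forall>i<N. ((\<lambda>t. norm (v i t - (\<Sum>k<N. \<pi> k *\<^sub>R v k 0))) \<longlongrightarrow> 0) at_top"
proof (intro allI impI)
  fix i assume "i < N"
  define diam where "diam t = Max {norm (v j t - v k t) | j k. j < N \<and> k < N}" for t
  have mean_const: "(\<Sum>k<N. \<pi> k *\<^sub>R v k t) = (\<Sum>k<N. \<pi> k *\<^sub>R v k 0)" if "t \<ge> 0" for t
  proof (rule weighted_mean_velocity_constant[where a = "\<lambda>i j t. \<alpha> * (A i j * \<psi> (norm (x j t - x i t)))"])
    show "\<pi> i * (\<alpha> * (A i j * \<psi> (norm (x j t - x i t)))) = \<pi> j * (\<alpha> * (A j i * \<psi> (norm (x i t - x j t))))"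
      if "i < N" "j < N" "i \<noteq> j" for i j t
      using pi_rev[OF that] by (simp add: norm_minus_commute mult_ac)
    show "(v i has_vector_derivative (\<Sum>j\<in>{..<N} - {i}.
            (\<alpha> * (A i j * \<psi> (norm (x j t - x i t)))) *\<^sub>R (v j t - v i t))) (at t within {0..})"
      if "i < N" "t \<ge> 0" for i t
      using dv[OF that] by (simp add: scaleR_sum_right)
  qed (fact that)
  have within_diam: "norm (v i t - (\<Sum>k<N. \<pi> k *\<^sub>R v k 0)) \<le> diam t" if "t \<ge> 0" for t
  proof -
    have "norm (v i t - v k t) \<le> diam t" if "k < N" for k
      unfolding diam_def using \<open>i < N\<close> that by (intro Max_ge finite_image_set2) auto
    then show ?thesis
      using norm_diff_convex_combination_le[where S = "{..<N}" and p = \<pi> and u = "v i t"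
          and y = "\<lambda>k. v k t" and B = "diam t"]
      by (simp add: pi_nonneg pi_sum flip: mean_const[OF that])
  qed
  have "eventually (\<lambda>t. norm (norm (v i t - (\<Sum>k<N. \<pi> k *\<^sub>R v k 0))) \<le> diam t) at_top"
    using eventually_ge_at_top[of "0::real"] by (rule eventually_mono) (simp add: within_diam)
  then show "((\<lambda>t. norm (v i t - (\<Sum>k<N. \<pi> k *\<^sub>R v k 0))) \<longlongrightarrow> 0) at_top"
    using flock_v unfolding diam_def[abs_def] by (rule Lim_null_comparison)
qed

end
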